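(* Let $w=a_{u_1^1}\cdots a_{u_n^r}|b_{v_1^1}\cdots b_{v_n^r}\in W^*(d,2m;\mathbb T)$. Then [$\phi(w)$ is an $r$-configuration of $U$ and $V$ and $\Phi(\phi(w))=w$] if and only if $w$ satisfies Condition (C).
   Context: $n,r,d\ge1$, $m=rn$. $U=\{u_1\prec\cdots\prec u_n\}$, $V=\{v_1\prec\cdots\prec v_n\}$; $\overline U=U\times[r]$, $\overline V=V\times[r]$ ordered lexicographically (write $u^s$ for $(u,s)$). An $r$-configuration is a bijection between $\overline U$ and $\overline V$; a quasi configuration is a partial matching. Pairs $(\bar u,\bar v),(\bar u',\bar v')$ are noncrossing if ($\bar u\prec\bar u'$ and $\bar v\prec\bar v'$) or ($\bar u'\prec\bar u$ and $\bar v'\prec\bar v$). Walks $w=a_{u_1^1}\cdots a_{u_n^r}|b_{v_1^1}\cdots b_{v_n^r}$, $a_{\bar u},b_{\bar v}\in[d]$, denote walks in $\mathbb Z^d$ from the origin with steps $e_{a_{\bar u}}$ ($\bar u$ increasing) then $-e_{b_{\bar v}}$ ($\bar v$ increasing). For a permutation $\pi$ of $[d]$, $T(\pi)=(1-\pi(1),\dots,d-\pi(d))$; $\mathbb T$ is the set of all $T(\pi)$; $W^*(d,2m;\mathbb T)$ is the set of such walks ending in $\mathbb T$. For an $r$-configuration $F$: $a_{\bar u}$ is the maximum size of a set of pairwise noncrossing pairs of $F$ containing the pair $(\bar u,\bar v')\in F$, all of whose pairs $(x,y)$ satisfy $x\preceq\bar u$, $y\preceq\bar v'$; $b_{\bar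 v}$ symmetrically; $\Phi(F)=a_{u_1^1}\cdots a_{u_n^r}|b_{v_1^1}\cdots b_{v_n^r}$. $A_k(w)=\{\bar u:a_{\bar u}=k\}$, $B_k(w)=\{\bar v:b_{\bar v}=k\}$; connecting equal-size ordered sets $A,B$ in a crossing way: pair the $i$-th smallest of $A$ with the $i$-th largest of $B$; $\phi(w)$: for each $k$, if $|A_k(w)|\ge|B_k(w)|$ connect the $|B_k(w)|$ smallest elements of $A_k(w)$ with $B_k(w)$ in a crossing way, else connect $A_k(w)$ with the $|A_k(w)|$ largest elements of $B_k(w)$ in a crossing way. For $\bar u\in\overline U$, $k(\bar u)=|\{\bar u'\preceq\bar u: a_{\bar u'}=a_{\bar u}\}|$ and $l(\bar u)=|\{\bar u'\preceq\bar u: a_{\bar u'}=a_{\bar u}-1\}|$. Condition (C): for every $\bar u$ with $a_{\bar u}>1$, we have $l(\bar u)>0$, the negative step sequence $b_{v_1^1}\cdots b_{v_n^r}$ contains at least $l(\bar u)$ occurrences of $a_{\bar u}-1$ and at least $k(\bar u)$ occurrences of $a_{\bar u}$, and the $l(\bar u)$-th-to-last occurrence of $a_{\bar u}-1$ in it comes before the $k(\bar u)$-th-to-last occurrence of $a_{\bar u}$ in it. *)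

theory Defs
  imports Main "HOL-Library.Product_Lexorder" "HOL-Combinatorics.Permutations"
begin

(* An element u_i^s of \<bar>U = U \<times> [r] is encoded as the pair (i, s) with i < n, s < r
   (0-based); likewise for \<bar>V.  Pairs carry the lexicographic order
   (HOL-Library.Product_Lexorder), which is exactly the order of the paper. *)
definition Ibar :: "nat \<Rightarrow> nat \<Rightarrow> (nat \<times> nat) set" where
  "Ibar n r = {0..<n} \<times> {0..<r}"

type_synonym elt = "nat \<times> nat"

(* A walk w = a_{u_1^1} ... a_{u_n^r} | b_{v_1^1} ... b_{v_n^r} is given by two labellings
   a, b :: elt \<Rightarrow> nat (only their values on \<bar>U resp. \<bar>V matter). *)

definition Aset :: "nat \<Rightarrow> nat \<Rightarrow> (elt \<Rightarrow> nat) \<Rightarrow> nat \<Rightarrow> elt set" where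
  "Aset n r a k = {u \<in> Ibar n r. a u = k}"
definition Bset :: "nat \<Rightarrow> nat \<Rightarrow> (elt \<Rightarrow> nat) \<Rightarrow> nat \<Rightarrow> elt set" where
  "Bset n r b k = {v \<in> Ibar n r. b v = k}"

(* the walk has steps in [d] and ends in \<T> = {T(\<pi>)}, T(\<pi>) = (1-\<pi>(1),...,d-\<pi>(d)) *)
definition in_Wstar :: "nat \<Rightarrow> nat \<Rightarrow> nat \<Rightarrow> (elt \<Rightarrow> nat) \<Rightarrow> (elt \<Rightarrow> nat) \<Rightarrow> bool" where
  "in_Wstar d n r a b \<longleftrightarrow>
     (\<forall>u \<in> Ibar n r. a u \<in> {1..d}) \<and> (\<forall>v \<in> Ibar n r. b v \<in> {1..d}) \<and>
     (\<exists>\<pi>. \<pi> permutes {1..d} \<and>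
        (\<forall>k \<in> {1..d}. int (card (Aset n r a k)) - int (card (Bset n r b k)) = int k - int (\<pi> k)))"

definition r_configuration :: "nat \<Rightarrow> nat \<Rightarrow> (elt \<times> elt) set \<Rightarrow> bool" where
  "r_configuration n r F \<longleftrightarrow> F \<subseteq> Ibar n r \<times> Ibar n r \<and>
     (\<forall>u \<in> Ibar n r. \<exists>!v. (u, v) \<in> F) \<and> (\<forall>v \<in> Ibar n r. \<exists>!u. (u, v) \<in> F)"

definition noncrossing :: "elt \<times> elt \<Rightarrow> elt \<times> elt \<Rightarrow> bool" where
  "noncrossing p q \<longleftrightarrow> (fst p < fst q \<and> snd p < snd q) \<or> (fst q < fst p \<and> snd q < snd p)"

definition pairwise_noncrossing :: "(elt \<times> elt) set \<Rightarrow> bool" where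
  "pairwise_noncrossing S \<longleftrightarrow> (\<forall>p \<in> S. \<forall>q \<in> S. p \<noteq> q \<longrightarrow> noncrossing p q)"

definition Phi_a :: "(elt \<times> elt) set \<Rightarrow> elt \<Rightarrow> nat" where
  "Phi_a F u = Max {card S | S v'. (u, v') \<in> F \<and> S \<subseteq> F \<and> pairwise_noncrossing S \<and>
      (u, v') \<in> S \<and> (\<forall>(x, y) \<in> S. x \<le> u \<and> y \<le> v')}"

definition Phi_b :: "(elt \<times> elt) set \<Rightarrow> elt \<Rightarrow> nat" where
  "Phi_b F v = Max {card S | S u'. (u', v) \<in> F \<and> S \<subseteq> F \<and> pairwise_noncrossing S \<and>
      (u', v) \<in> S \<and> (\<forall>(x, y) \<in> S. x \<le> u' \<and> y \<le> v)}"

definition cross_connect :: "elt set \<Rightarrow> elt set \<Rightarrow> (elt \<times> elt) set" where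
  "cross_connect A B =
     {(sorted_list_of_set A ! i, rev (sorted_list_of_set B) ! i) | i. i < card A}"

definition phi :: "nat \<Rightarrow> nat \<Rightarrow> nat \<Rightarrow> (elt \<Rightarrow> nat) \<Rightarrow> (elt \<Rightarrow> nat) \<Rightarrow> (elt \<times> elt) set" where
  "phi d n r a b = (\<Union>k \<in> {1..d}.
     (let A = Aset n r a k; B = Bset n r b k in
      if card A \<ge> card B
      then cross_connect (set (take (card B) (sorted_list_of_set A))) B
      else cross_connect A (set (drop (card B - card A) (sorted_list_of_set B)))))"

(* the i-th-to-last (i \<ge> 1) element of a finite ordered set *)
definition kth_last :: "elt set \<Rightarrow> nat \<Rightarrow> elt" where
  "kth_last S i = rev (sorted_list_of_set S) ! (i - 1)"

definition kfun :: "nat \<Rightarrow> nat \<Rightarrow> (elt \<Rightarrow> nat) \<Rightarrow> elt \<Rightarrow> nat" where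
  "kfun n r a u = card {u' \<in> Ibar n r. u' \<le> u \<and> a u' = a u}"
definition lfun :: "nat \<Rightarrow> nat \<Rightarrow> (elt \<Rightarrow> nat) \<Rightarrow> elt \<Rightarrow> nat" where
  "lfun n r a u = card {u' \<in> Ibar n r. u' \<le> u \<and> a u' = a u - 1}"

(* Condition (C); occurrences of a value c in the negative step sequence are the
   elements of Bset n r b c, ordered as in \<bar>V *)
definition condition_C :: "nat \<Rightarrow> nat \<Rightarrow> (elt \<Rightarrow> nat) \<Rightarrow> (elt \<Rightarrow> nat) \<Rightarrow> bool" where
  "condition_C n r a b \<longleftrightarrow> (\<forall>u \<in> Ibar n r. a u > 1 \<longrightarrow>
      lfun n r a u > 0 \<and>
      card (Bset n r b (a u - 1)) \<ge> lfun n r a u \<and>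
      card (Bset n r b (a u)) \<ge> kfun n r a u \<and>
      kth_last (Bset n r b (a u - 1)) (lfun n r a u) < kth_last (Bset n r b (a u)) (kfun n r a u))"

end

(*
  Both sides of the equivalence force |A_k| = |B_k| for every level k: an r-configuration
  pairing only equal steps does so directly, while Condition (C) applied to the last element
  of A_k gives |A_k| <= |B_k| for k >= 2, the endpoint T(pi) gives it for k = 1, and the equal
  totals give equality.  Then phi(w) is a perfect matching joining each level crosswise, so any
  two pairs of the same level cross.  For such a matching, a_u is the size of a longest
  noncrossing chain ending at the pair of u exactly when every pair of level k > 1 has a pair of
  level k - 1 strictly south-west of it: then levels strictly increase along a chain, and
  conversely the second-highest pair of a longest chain is such a predecessor.  Since partners
  within a level decrease, it suffices to test the last element of level k - 1 before u, and
  this test is literally Condition (C).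
*)

theory Submission
  imports Defs
begin

section \<open>Ranks in finite linear orders\<close>

lemma sorted_list_of_set_nth_less_iff:
  fixes S :: "'a::linorder set"
  assumes "finite S" "i < card S" "j < card S"
  shows "sorted_list_of_set S ! i < sorted_list_of_set S ! j \<longleftrightarrow> i < j"
  using assms sorted_wrt_nth_less[OF strict_sorted_list_of_set, of _ _ S]
  by (metis length_sorted_list_of_set less_asym nat_neq_iff)

lemma sorted_list_of_set_nth_mem:
  "finite S \<Longrightarrow> i < card S \<Longrightarrow> sorted_list_of_set S ! i \<in> S"
  by (metis length_sorted_list_of_set nth_mem set_sorted_list_of_set)

lemma sorted_list_of_set_indexE:
  assumes "finite S" "x \<in> S"
  obtains i where "i < card S" "x = sorted_list_of_set S ! i"
  using assms by (metis in_set_conv_nth length_sorted_list_of_set set_sorted_list_of_set)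

definition rank :: "'a::linorder set \<Rightarrow> 'a \<Rightarrow> nat" where
  "rank S x = card {y \<in> S. y < x}"

lemma rank_less_card: "finite S \<Longrightarrow> x \<in> S \<Longrightarrow> rank S x < card S"
  unfolding rank_def by (intro psubset_card_mono) auto

lemma rank_mono: "finite S \<Longrightarrow> x \<le> y \<Longrightarrow> rank S x \<le> rank S y"
  unfolding rank_def by (intro card_mono) auto

lemma rank_strict_mono: "finite S \<Longrightarrow> x \<in> S \<Longrightarrow> x < y \<Longrightarrow> rank S x < rank S y"
  unfolding rank_def by (intro psubset_card_mono) auto

lemma rank_less_rank_iff:
  "finite S \<Longrightarrow> x \<in> S \<Longrightarrow> y \<in> S \<Longrightarrow> rank S x < rank S y \<longleftrightarrow> x < y"
  by (meson leD linorder_le_less_linear rank_mono rank_strict_mono)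

lemma rank_nth_sorted_list_of_set:
  assumes "finite S" "i < card S"
  shows "rank S (sorted_list_of_set S ! i) = i"
proof -
  let ?s = "sorted_list_of_set S"
  have "{y \<in> S. y < ?s ! i} = (\<lambda>j. ?s ! j) ` {..<i}"
  proof (intro set_eqI iffI)
    fix y assume "y \<in> {y \<in> S. y < ?s ! i}"
    then show "y \<in> (\<lambda>j. ?s ! j) ` {..<i}"
      using assms sorted_list_of_set_nth_less_iff
      by (auto elim!: sorted_list_of_set_indexE[OF assms(1)])
  next
    fix y assume "y \<in> (\<lambda>j. ?s ! j) ` {..<i}"
    then show "y \<in> {y \<in> S. y < ?s ! i}"
      using assms sorted_list_of_set_nth_less_iff sorted_list_of_set_nth_mem by fastforce
  qed
  moreover have "inj_on (\<lambda>j. ?s ! j) {..<i}"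
    using assms by (intro inj_onI) (simp add: nth_eq_iff_index_eq)
  ultimately show ?thesis
    unfolding rank_def by (simp add: card_image)
qed

lemma nth_sorted_list_of_set_rank:
  "finite S \<Longrightarrow> x \<in> S \<Longrightarrow> sorted_list_of_set S ! rank S x = x"
  by (metis sorted_list_of_set_indexE rank_nth_sorted_list_of_set)

lemma rank_inject:
  "finite S \<Longrightarrow> x \<in> S \<Longrightarrow> y \<in> S \<Longrightarrow> rank S x = rank S y \<Longrightarrow> x = y"
  by (metis nth_sorted_list_of_set_rank)

lemma kth_last_eq_nth:
  "0 < i \<Longrightarrow> i \<le> card S \<Longrightarrow> kth_last S i = sorted_list_of_set S ! (card S - i)"
  unfolding kth_last_def by (cases "finite S") (simp_all add: rev_nth Suc_diff_Suc)

lemma kth_last_antimono: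
  "finite S \<Longrightarrow> 0 < i \<Longrightarrow> i \<le> j \<Longrightarrow> j \<le> card S \<Longrightarrow> kth_last S j \<le> kth_last S i"
  by (simp add: kth_last_eq_nth sorted_nth_mono)

section \<open>The crossing matching\<close>

lemma mem_cross_connect_iff:
  assumes "finite X" "finite Y" "card X = card Y"
  shows "(u, v) \<in> cross_connect X Y \<longleftrightarrow>
    u \<in> X \<and> v \<in> Y \<and> rank X u + rank Y v + 1 = card X"
proof
  assume "(u, v) \<in> cross_connect X Y"
  then obtain i where i: "i < card X" "u = sorted_list_of_set X ! i"
    and v: "v = sorted_list_of_set Y ! (card Y - 1 - i)"
    using assms unfolding cross_connect_def by (auto simp: rev_nth)
  have "card Y - 1 - i < card Y" using i assms by linarith
  then show "u \<in> X \<and> v \<in> Y \<and> rank X u + rank Y v + 1 = card X"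
    using i v assms
    by (simp add: sorted_list_of_set_nth_mem rank_nth_sorted_list_of_set)
next
  assume uv: "u \<in> X \<and> v \<in> Y \<and> rank X u + rank Y v + 1 = card X"
  then have "rank X u < card X" "rank Y v = card Y - 1 - rank X u"
    using assms by linarith+
  moreover have "v = sorted_list_of_set Y ! rank Y v" "u = sorted_list_of_set X ! rank X u"
    using uv assms by (simp_all add: nth_sorted_list_of_set_rank)
  ultimately show "(u, v) \<in> cross_connect X Y"
    using assms unfolding cross_connect_def by (auto simp: rev_nth)
qed

lemma cross_connect_subset:
  assumes "finite X" "finite Y" "card X \<le> card Y"
  shows "cross_connect X Y \<subseteq> X \<times> Y"
  using assms unfolding cross_connect_def
  by (auto simp: rev_nth sorted_list_of_set_nth_mem)

lemma finite_Ibar [simp]: "finite (Ibar n r)"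
  unfolding Ibar_def by simp

lemma finite_Aset [simp]: "finite (Aset n r a k)"
  unfolding Aset_def by simp

lemma finite_Bset [simp]: "finite (Bset n r b k)"
  unfolding Bset_def by simp

lemma phi_subset_levels:
  "phi d n r a b \<subseteq> {(u, v) \<in> Ibar n r \<times> Ibar n r. b v = a u}"
proof -
  have piece: "cross_connect X Y \<subseteq> Aset n r a k \<times> Bset n r b k"
    if "X \<subseteq> Aset n r a k" "Y \<subseteq> Bset n r b k" "card X \<le> card Y" for k X Y
    using that cross_connect_subset[of X Y] finite_subset[OF _ finite_Aset] finite_subset[OF _ finite_Bset]
    by blast
  have "(let A = Aset n r a k; B = Bset n r b k in
      if card A \<ge> card B
      then cross_connect (set (take (card B) (sorted_list_of_set A))) B
      else cross_connect A (set (drop (card B - card A) (sorted_list_of_set B))))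
    \<subseteq> Aset n r a k \<times> Bset n r b k" for k
  proof -
    let ?A = "Aset n r a k" and ?B = "Bset n r b k"
    show ?thesis
    proof (cases "card ?B \<le> card ?A")
      case True
      have "cross_connect (set (take (card ?B) (sorted_list_of_set ?A))) ?B \<subseteq> ?A \<times> ?B"
        using card_length[of "take (card ?B) (sorted_list_of_set ?A)"]
        by (intro piece) (auto dest: in_set_takeD)
      with True show ?thesis by (simp add: Let_def)
    next
      case False
      have "cross_connect ?A (set (drop (card ?B - card ?A) (sorted_list_of_set ?B))) \<subseteq> ?A \<times> ?B"
        using False by (intro piece) (auto dest: in_set_dropD simp: distinct_card)
      with False show ?thesis by (simp add: Let_def)
    qed
  qed
  then show ?thesis
    unfolding phi_def by (fastforce simp: Aset_def Bset_def)
qed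

lemma phi_balanced:
  assumes "\<And>k. card (Aset n r a k) = card (Bset n r b k)"
  shows "phi d n r a b = (\<Union>k \<in> {1..d}. cross_connect (Aset n r a k) (Bset n r b k))"
  unfolding phi_def Let_def using assms by simp

section \<open>Level sizes\<close>

lemma kfun_eq_Suc_rank:
  assumes "u \<in> Ibar n r"
  shows "kfun n r a u = Suc (rank (Aset n r a (a u)) u)"
proof -
  have "{u' \<in> Ibar n r. u' \<le> u \<and> a u' = a u} = insert u {y \<in> Aset n r a (a u). y < u}"
    using assms unfolding Aset_def by auto
  then show ?thesis
    unfolding kfun_def rank_def by simp
qed

lemma kfun_le_lfun:
  "a u' = a u - 1 \<Longrightarrow> u' \<le> u \<Longrightarrow> kfun n r a u' \<le> lfun n r a u"
  unfolding kfun_def lfun_def by (intro card_mono) auto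

lemma kfun_eq_lfun:
  assumes "a u' = a u - 1" "u' \<le> u" "\<And>y. y \<in> Ibar n r \<Longrightarrow> a y = a u - 1 \<Longrightarrow> y \<le> u \<Longrightarrow> y \<le> u'"
  shows "kfun n r a u' = lfun n r a u"
  unfolding kfun_def lfun_def using assms by (metis order_trans)

lemma lfun_le_card: "lfun n r a u \<le> card (Aset n r a (a u - 1))"
  unfolding lfun_def Aset_def by (intro card_mono) auto

lemma r_configuration_level_card_eq:
  assumes "r_configuration n r F" "\<forall>(u, v) \<in> F. b v = a u"
  shows "card (Aset n r a k) = card (Bset n r b k)"
proof -
  have F: "F \<subseteq> Ibar n r \<times> Ibar n r" "\<forall>u \<in> Ibar n r. \<exists>!v. (u, v) \<in> F"
    "\<forall>v \<in> Ibar n r. \<exists>!u. (u, v) \<in> F"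
    using assms(1) unfolding r_configuration_def by auto
  have same_level: "b v = k \<longleftrightarrow> a u = k" if "(u, v) \<in> F" for u v
    using that assms(2) by auto
  show ?thesis
  proof (rule antisym)
    show "card (Aset n r a k) \<le> card (Bset n r b k)"
    proof (rule card_le_if_inj_on_rel[where r = "\<lambda>u v. (u, v) \<in> F"])
      fix u assume u: "u \<in> Aset n r a k"
      then obtain v where "(u, v) \<in> F"
        using F(2) unfolding Aset_def by blast
      then show "\<exists>v. v \<in> Bset n r b k \<and> (u, v) \<in> F"
        using u F(1) same_level unfolding Aset_def Bset_def by blast
    next
      fix u u' v assume "v \<in> Bset n r b k" "(u, v) \<in> F" "(u', v) \<in> F"
      then show "u = u'"
        using F(3) unfolding Bset_def by blast
    qed simp
    show "card (Bset n r b k) \<le> card (Aset n r a k)"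
    proof (rule card_le_if_inj_on_rel[where r = "\<lambda>v u. (u, v) \<in> F"])
      fix v assume v: "v \<in> Bset n r b k"
      then obtain u where "(u, v) \<in> F"
        using F(3) unfolding Bset_def by blast
      then show "\<exists>u. u \<in> Aset n r a k \<and> (u, v) \<in> F"
        using v F(1) same_level unfolding Aset_def Bset_def by blast
    next
      fix v v' u assume "u \<in> Aset n r a k" "(u, v) \<in> F" "(u, v') \<in> F"
      then show "v = v'"
        using F(2) unfolding Aset_def by blast
    qed simp
  qed
qed

lemma Bset_eq_Aset: "Bset n r = Aset n r"
  by (simp add: fun_eq_iff Aset_def Bset_def)

lemma card_Ibar_eq_sum_card_Aset:
  assumes "\<forall>u \<in> Ibar n r. a u \<in> {1..d}"
  shows "card (Ibar n r) = (\<Sum>k \<in> {1..d}. card (Aset n r a k))"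
proof -
  have "Ibar n r = (\<Union>k \<in> {1..d}. Aset n r a k)"
    using assms unfolding Aset_def by auto
  moreover have "card (\<Union>k \<in> {1..d}. Aset n r a k) = (\<Sum>k \<in> {1..d}. card (Aset n r a k))"
    by (rule card_UN_disjoint) (auto simp: Aset_def)
  ultimately show ?thesis
    by simp
qed

lemma condition_C_level_card_le:
  assumes "condition_C n r a b" "2 \<le> k"
  shows "card (Aset n r a k) \<le> card (Bset n r b k)"
proof (cases "Aset n r a k = {}")
  case False
  define u where "u = Max (Aset n r a k)"
  have "u \<in> Aset n r a k"
    using False unfolding u_def by (intro Max_in) auto
  then have u: "u \<in> Ibar n r" "a u = k"
    unfolding Aset_def by auto
  have "{u' \<in> Ibar n r. u' \<le> u \<and> a u' = a u} = Aset n r a k"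
    using u unfolding u_def by (auto simp: Aset_def)
  then have "kfun n r a u = card (Aset n r a k)"
    unfolding kfun_def by simp
  then show ?thesis
    using assms u unfolding condition_C_def by auto
qed simp

lemma condition_C_balanced:
  assumes "in_Wstar d n r a b" "condition_C n r a b"
  shows "card (Aset n r a k) = card (Bset n r b k)"
proof -
  obtain \<pi> where labels: "\<forall>u \<in> Ibar n r. a u \<in> {1..d}" "\<forall>v \<in> Ibar n r. b v \<in> {1..d}"
    and \<pi>: "\<pi> permutes {1..d}"
      "\<forall>k \<in> {1..d}. int (card (Aset n r a k)) - int (card (Bset n r b k)) = int k - int (\<pi> k)"
    using assms(1) unfolding in_Wstar_def by blast
  have le: "card (Aset n r a k) \<le> card (Bset n r b k)" if "k \<in> {1..d}" for k
  proof (cases "k = 1")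
    case True
    have "\<pi> 1 \<in> {1..d}"
      using permutes_in_image[OF \<pi>(1)] that True by simp
    then show ?thesis
      using \<pi>(2) that True by fastforce
  next
    case False
    then show ?thesis
      using condition_C_level_card_le[OF assms(2)] that by simp
  qed
  have sums: "(\<Sum>k \<in> {1..d}. card (Aset n r a k)) = (\<Sum>k \<in> {1..d}. card (Bset n r b k))"
    using card_Ibar_eq_sum_card_Aset[OF labels(1)] card_Ibar_eq_sum_card_Aset[OF labels(2)]
    by (simp add: Bset_eq_Aset)
  show ?thesis
  proof (cases "k \<in> {1..d}")
    case True
    then show ?thesis
      using sum_mono_inv[OF sums le True] by simp
  next
    case False
    then have "Aset n r a k = {}" "Bset n r b k = {}"
      using labels unfolding Aset_def Bset_def by auto
    then show ?thesis by simp
  qed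
qed

section \<open>Noncrossing chains\<close>

definition noncrossing_chain :: "(elt \<times> elt) set \<Rightarrow> elt \<Rightarrow> elt \<Rightarrow> (elt \<times> elt) set \<Rightarrow> bool" where
  "noncrossing_chain F u v S \<longleftrightarrow>
     S \<subseteq> F \<and> pairwise_noncrossing S \<and> (u, v) \<in> S \<and> (\<forall>p \<in> S. fst p \<le> u \<and> snd p \<le> v)"

definition longest_chain :: "(elt \<times> elt) set \<Rightarrow> elt \<Rightarrow> elt \<Rightarrow> nat" where
  "longest_chain F u v = Max {card S | S. noncrossing_chain F u v S}"

definition has_predecessors :: "(elt \<times> elt) set \<Rightarrow> (elt \<Rightarrow> nat) \<Rightarrow> bool" where
  "has_predecessors F a \<longleftrightarrow>
     (\<forall>(u, v) \<in> F. 1 < a u \<longrightarrow> (\<exists>(u', v') \<in> F. a u' = a u - 1 \<and> u' < u \<and> v' < v))"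

lemma Phi_a_eq_longest_chain:
  assumes "(u, v) \<in> F" "\<And>v'. (u, v') \<in> F \<Longrightarrow> v' = v"
  shows "Phi_a F u = longest_chain F u v"
proof -
  have "{card S | S v'. (u, v') \<in> F \<and> S \<subseteq> F \<and> pairwise_noncrossing S \<and>
      (u, v') \<in> S \<and> (\<forall>(x, y) \<in> S. x \<le> u \<and> y \<le> v')} = {card S | S. noncrossing_chain F u v S}"
    unfolding noncrossing_chain_def Ball_def case_prod_beta using assms by blast
  then show ?thesis
    unfolding Phi_a_def longest_chain_def by simp
qed

lemma Phi_b_eq_longest_chain:
  assumes "(u, v) \<in> F" "\<And>u'. (u', v) \<in> F \<Longrightarrow> u' = u"
  shows "Phi_b F v = longest_chain F u v"
proof -
  have "{card S | S u'. (u', v) \<in> F \<and> S \<subseteq> F \<and> pairwise_noncrossing S \<and>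
      (u', v) \<in> S \<and> (\<forall>(x, y) \<in> S. x \<le> u' \<and> y \<le> v)} = {card S | S. noncrossing_chain F u v S}"
    unfolding noncrossing_chain_def Ball_def case_prod_beta using assms by blast
  then show ?thesis
    unfolding Phi_b_def longest_chain_def by simp
qed

lemma finite_chain_cards:
  "finite F \<Longrightarrow> finite {card S | S. noncrossing_chain F u v S}"
  unfolding noncrossing_chain_def
  by (rule finite_subset[of _ "{..card F}"]) (auto intro: card_mono)

lemma noncrossing_chain_singleton: "(u, v) \<in> F \<Longrightarrow> noncrossing_chain F u v {(u, v)}"
  unfolding noncrossing_chain_def pairwise_noncrossing_def by auto

lemma card_le_longest_chain:
  "finite F \<Longrightarrow> noncrossing_chain F u v S \<Longrightarrow> card S \<le> longest_chain F u v"
  unfolding longest_chain_def by (rule Max_ge) (auto simp: finite_chain_cards)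

lemma longest_chain_attained:
  assumes "finite F" "(u, v) \<in> F"
  obtains S where "noncrossing_chain F u v S" "card S = longest_chain F u v"
proof -
  have "{card S | S. noncrossing_chain F u v S} \<noteq> {}"
    using noncrossing_chain_singleton[OF assms(2)] by blast
  then have "longest_chain F u v \<in> {card S | S. noncrossing_chain F u v S}"
    unfolding longest_chain_def by (rule Max_in[OF finite_chain_cards[OF assms(1)]])
  then show ?thesis
    using that by auto
qed

lemma noncrossing_chain_insert:
  assumes "noncrossing_chain F u' v' S" "(u, v) \<in> F" "u' < u" "v' < v"
  shows "noncrossing_chain F u v (insert (u, v) S)"
proof -
  have S: "S \<subseteq> F" "pairwise_noncrossing S" "\<forall>p \<in> S. fst p \<le> u' \<and> snd p \<le> v'"
    using assms(1) unfolding noncrossing_chain_def by blast+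
  have below: "fst p < u \<and> snd p < v" if "p \<in> S" for p
    using S(3) that assms(3,4) by (meson order_le_less_trans)
  then have "noncrossing p (u, v) \<and> noncrossing (u, v) p" if "p \<in> S" for p
    using that unfolding noncrossing_def by auto
  then have "pairwise_noncrossing (insert (u, v) S)"
    using S(2) unfolding pairwise_noncrossing_def by blast
  moreover have "\<forall>p \<in> insert (u, v) S. fst p \<le> u \<and> snd p \<le> v"
    using below by fastforce
  ultimately show ?thesis
    using S(1) assms(2) unfolding noncrossing_chain_def by blast
qed

lemma card_insert_noncrossing_chain:
  assumes "finite F" "noncrossing_chain F u' v' S" "u' < u"
  shows "card (insert (u, v) S) = Suc (card S)"
proof -
  have "finite S"
    using assms(1,2) finite_subset unfolding noncrossing_chain_def by blast
  moreover have "(u, v) \<notin> S"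
    using assms(2,3) unfolding noncrossing_chain_def by auto
  ultimately show ?thesis by simp
qed

lemma noncrossing_chain_remove_top:
  assumes "finite F" "noncrossing_chain F u v S" "S \<noteq> {(u, v)}"
  obtains u' v' where "u' < u" "v' < v" "noncrossing_chain F u' v' (S - {(u, v)})"
proof -
  let ?S' = "S - {(u, v)}"
  have S: "S \<subseteq> F" "pairwise_noncrossing S" "(u, v) \<in> S" "\<forall>p \<in> S. fst p \<le> u \<and> snd p \<le> v"
    using assms(2) unfolding noncrossing_chain_def by blast+
  have "finite ?S'"
    using S(1) assms(1) finite_subset by blast
  moreover have "?S' \<noteq> {}"
    using S(3) assms(3) by blast
  ultimately have "finite (fst ` ?S')" "fst ` ?S' \<noteq> {}"
    by simp_all
  then have "Max (fst ` ?S') \<in> fst ` ?S'"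
    by (rule Max_in)
  then obtain q where q: "q \<in> ?S'" "fst q = Max (fst ` ?S')"
    unfolding image_iff by (metis (no_types))
  have noncrossing: "noncrossing p q" if "p \<in> S" "p \<noteq> q" for p
    using S(2) q(1) that unfolding pairwise_noncrossing_def by blast
  have "noncrossing (u, v) q" "fst q \<le> u" "snd q \<le> v"
    using noncrossing[OF S(3)] q(1) S(4) by blast+
  then have "fst q < u \<and> snd q < v"
    unfolding noncrossing_def by (metis fst_conv snd_conv leD)
  moreover have below_q: "\<forall>p \<in> ?S'. fst p \<le> fst q \<and> snd p \<le> snd q"
  proof
    fix p assume "p \<in> ?S'"
    show "fst p \<le> fst q \<and> snd p \<le> snd q"
    proof (cases "p = q")
      case False
      have "fst p \<le> fst q"
        using \<open>p \<in> ?S'\<close> q(2) \<open>finite (fst ` ?S')\<close> by simp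
      moreover have "noncrossing p q"
        using noncrossing \<open>p \<in> ?S'\<close> False by blast
      ultimately show ?thesis
        unfolding noncrossing_def by (metis leD less_imp_le)
    qed simp
  qed
  then have "noncrossing_chain F (fst q) (snd q) ?S'"
    unfolding noncrossing_chain_def
  proof (intro conjI)
    show "?S' \<subseteq> F"
      using S(1) by blast
    show "pairwise_noncrossing ?S'"
      using S(2) unfolding pairwise_noncrossing_def by blast
    show "(fst q, snd q) \<in> ?S'"
      using q(1) by simp
  qed
  ultimately show ?thesis
    using that by blast
qed

lemma has_predecessors_if_longest_chain_eq_level:
  assumes "finite F" "\<And>u v. (u, v) \<in> F \<Longrightarrow> longest_chain F u v = a u"
  shows "has_predecessors F a"
  unfolding has_predecessors_def
proof (intro ballI impI, clarify)
  \<comment> \<open>the second-highest pair of a longest chain at \<open>(u, v)\<close> is the predecessor\<close>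
  fix u v assume uv: "(u, v) \<in> F" and level: "1 < a u"
  obtain S where S: "noncrossing_chain F u v S" "card S = a u"
    using longest_chain_attained[OF assms(1) uv] assms(2)[OF uv] by metis
  then have "S \<noteq> {(u, v)}" using level by auto
  then obtain u' v' where below: "u' < u" "v' < v" "noncrossing_chain F u' v' (S - {(u, v)})"
    using noncrossing_chain_remove_top[OF assms(1) S(1)] by metis
  have u'v': "(u', v') \<in> F"
    using below(3) unfolding noncrossing_chain_def by blast
  have "finite S" "(u, v) \<in> S"
    using S(1) assms(1) finite_subset unfolding noncrossing_chain_def by blast+
  then have "a u - 1 \<le> a u'"
    using card_le_longest_chain[OF assms(1) below(3)] assms(2)[OF u'v'] S(2)
    by (simp add: card_Diff_singleton)
  moreover obtain S' where S': "noncrossing_chain F u' v' S'" "card S' = a u'"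
    using longest_chain_attained[OF assms(1) u'v'] assms(2)[OF u'v'] by metis
  have "Suc (a u') \<le> a u"
    using card_le_longest_chain[OF assms(1) noncrossing_chain_insert[OF S'(1) uv below(1,2)]]
      card_insert_noncrossing_chain[OF assms(1) S'(1) below(1)] S'(2) assms(2)[OF uv] by simp
  ultimately have "a u' = a u - 1"
    by linarith
  then show "\<exists>(u', v') \<in> F. a u' = a u - 1 \<and> u' < u \<and> v' < v"
    using u'v' below(1,2) by blast
qed

locale crossing_levels =
  fixes F :: "(elt \<times> elt) set" and a :: "elt \<Rightarrow> nat"
  assumes finite_F: "finite F"
    and level_pos: "(u, v) \<in> F \<Longrightarrow> 0 < a u"
    and same_level_cross: "(u, v) \<in> F \<Longrightarrow> (u', v') \<in> F \<Longrightarrow> a u' = a u \<Longrightarrow> u < u' \<Longrightarrow> v' < v"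
begin

lemma level_less_if_southwest:
  assumes pred: "has_predecessors F a" and uv: "(u, v) \<in> F"
  shows "(u', v') \<in> F \<Longrightarrow> u' < u \<Longrightarrow> v' < v \<Longrightarrow> a u' < a u"
proof (induction "a u'" arbitrary: u' v' rule: less_induct)
  case less
  show ?case
  proof (rule ccontr)
    assume "\<not> a u' < a u"
    moreover have "a u \<noteq> a u'"
      using same_level_cross[OF less.prems(1) uv _ less.prems(2)] less.prems(3) by (metis less_asym)
    ultimately have "a u < a u'"
      by simp
    then have "1 < a u'"
      using level_pos[OF uv] by simp
    then obtain u'' v'' where pred': "(u'', v'') \<in> F" "a u'' = a u' - 1" "u'' < u'" "v'' < v'"
      using pred less.prems(1) unfolding has_predecessors_def by blast
    then have "a u'' < a u"
      using less.hyps[of u'' v''] less.prems(2,3) \<open>1 < a u'\<close> by simp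
    then show False
      using \<open>a u < a u'\<close> pred'(2) by linarith
  qed
qed

lemma chain_of_card_level:
  assumes pred: "has_predecessors F a"
  shows "(u, v) \<in> F \<Longrightarrow> \<exists>S. noncrossing_chain F u v S \<and> card S = a u"
proof (induction "a u" arbitrary: u v rule: less_induct)
  case less
  show ?case
  proof (cases "a u = 1")
    case True
    then show ?thesis
      using noncrossing_chain_singleton[OF less.prems] by auto
  next
    case False
    then have "1 < a u"
      using level_pos[OF less.prems] by simp
    then obtain u' v' where pred': "(u', v') \<in> F" "a u' = a u - 1" "u' < u" "v' < v"
      using pred less.prems unfolding has_predecessors_def by blast
    then obtain S where S: "noncrossing_chain F u' v' S" "card S = a u'"
      using less.hyps[of u' v'] \<open>1 < a u\<close> by auto
    have "noncrossing_chain F u v (insert (u, v) S)"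
      by (rule noncrossing_chain_insert[OF S(1) less.prems pred'(3,4)])
    moreover have "card (insert (u, v) S) = a u"
      using card_insert_noncrossing_chain[OF finite_F S(1) pred'(3)] S(2) pred'(2) \<open>1 < a u\<close>
      by simp
    ultimately show ?thesis
      by blast
  qed
qed

lemma card_chain_le_level:
  assumes pred: "has_predecessors F a" and uv: "(u, v) \<in> F" and S: "noncrossing_chain F u v S"
  shows "card S \<le> a u"
proof -
  have S: "S \<subseteq> F" "pairwise_noncrossing S" "(u, v) \<in> S" "\<forall>p \<in> S. fst p \<le> u \<and> snd p \<le> v"
    using S unfolding noncrossing_chain_def by blast+
  have in_F: "(fst p, snd p) \<in> F" if "p \<in> S" for p
    using that S(1) by auto
  have noncrossing: "noncrossing p q" if "p \<in> S" "q \<in> S" "p \<noteq> q" for p q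
    using that S(2) unfolding pairwise_noncrossing_def by blast
  have "inj_on (\<lambda>p. a (fst p)) S"
  proof (rule inj_onI, rule ccontr)
    fix p q assume pq: "p \<in> S" "q \<in> S" "a (fst p) = a (fst q)" "p \<noteq> q"
    then show False
      using noncrossing[OF pq(1,2,4)] same_level_cross[OF in_F[OF pq(1)] in_F[OF pq(2)]]
        same_level_cross[OF in_F[OF pq(2)] in_F[OF pq(1)]]
      unfolding noncrossing_def by (metis less_asym)
  qed
  moreover have "a (fst p) \<in> {1..a u}" if "p \<in> S" for p
  proof (cases "p = (u, v)")
    case False
    have "fst p \<le> u" "snd p \<le> v"
      using S(4) that by blast+
    then have "fst p < u \<and> snd p < v"
      using noncrossing[OF that S(3) False] unfolding noncrossing_def by (metis fst_conv snd_conv leD)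
    then have "a (fst p) < a u"
      using level_less_if_southwest[OF pred uv in_F[OF that]] by blast
    then show ?thesis
      using level_pos[OF in_F[OF that]] by simp
  qed (use level_pos[OF uv] in simp)
  ultimately have "card S \<le> card {1..a u}"
    by (intro card_inj_on_le) auto
  then show ?thesis
    by simp
qed

lemma longest_chain_eq_level:
  assumes "has_predecessors F a" "(u, v) \<in> F"
  shows "longest_chain F u v = a u"
proof (rule antisym)
  obtain S where "noncrossing_chain F u v S" "card S = longest_chain F u v"
    using longest_chain_attained[OF finite_F assms(2)] .
  then show "longest_chain F u v \<le> a u"
    using card_chain_le_level[OF assms] by metis
  obtain S' where "noncrossing_chain F u v S'" "card S' = a u"
    using chain_of_card_level[OF assms] by blast
  then show "a u \<le> longest_chain F u v"
    using card_le_longest_chain[OF finite_F] by metis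
qed

end

section \<open>The matching of a balanced walk\<close>

locale balanced_walk =
  fixes n r d :: nat and a b :: "elt \<Rightarrow> nat"
  assumes labels: "\<forall>u \<in> Ibar n r. a u \<in> {1..d}"
    and balanced: "\<And>k. card (Aset n r a k) = card (Bset n r b k)"
begin

abbreviation "F \<equiv> phi d n r a b"
abbreviation "I \<equiv> Ibar n r"
abbreviation "A \<equiv> Aset n r a"
abbreviation "B \<equiv> Bset n r b"

lemma mem_F_iff:
  "(u, v) \<in> F \<longleftrightarrow> u \<in> I \<and> v \<in> I \<and> b v = a u \<and> rank (A (a u)) u + rank (B (a u)) v + 1 = card (A (a u))"
proof -
  have "(u, v) \<in> cross_connect (A k) (B k) \<longleftrightarrow>
      a u = k \<and> u \<in> I \<and> v \<in> I \<and> b v = a u \<and> rank (A (a u)) u + rank (B (a u)) v + 1 = card (A (a u))"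
    for k
    using mem_cross_connect_iff[OF finite_Aset finite_Bset balanced] unfolding Aset_def Bset_def by auto
  then show ?thesis
    unfolding phi_balanced[OF balanced] using labels by blast
qed

lemma F_subset: "F \<subseteq> I \<times> I"
  using phi_subset_levels by blast

lemma finite_F: "finite F"
  using F_subset by (rule finite_subset) simp

text \<open>In \<open>phi\<close> the \<open>i\<close>-th element of \<open>A k\<close> is paired with the \<open>i\<close>-th largest element of
  \<open>B k\<close>; the partner of \<open>u\<close> is the right-hand side of the inequality in Condition (C).\<close>

definition partner :: "elt \<Rightarrow> elt" where
  "partner u = kth_last (B (a u)) (kfun n r a u)"

lemma partner_in_F:
  assumes "u \<in> I"
  shows "(u, partner u) \<in> F"
proof -
  let ?k = "a u"
  have u: "u \<in> A ?k"
    using assms unfolding Aset_def by simp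
  then have i: "card (B ?k) - Suc (rank (A ?k) u) < card (B ?k)"
    using rank_less_card[OF finite_Aset u] balanced by simp
  have "partner u = sorted_list_of_set (B ?k) ! (card (B ?k) - Suc (rank (A ?k) u))"
    unfolding partner_def kfun_eq_Suc_rank[OF assms]
    using rank_less_card[OF finite_Aset u] balanced by (simp add: kth_last_eq_nth)
  then have "partner u \<in> B ?k" "rank (B ?k) (partner u) = card (B ?k) - Suc (rank (A ?k) u)"
    using sorted_list_of_set_nth_mem[OF finite_Bset i] rank_nth_sorted_list_of_set[OF finite_Bset i]
    by simp_all
  then show ?thesis
    unfolding mem_F_iff using assms rank_less_card[OF finite_Aset u] balanced
    unfolding Bset_def by auto
qed

lemma eq_partner_if_in_F:
  assumes "(u, v) \<in> F"
  shows "v = partner u"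
proof -
  have "v \<in> B (a u)" "partner u \<in> B (a u)" "rank (B (a u)) v = rank (B (a u)) (partner u)"
    using assms partner_in_F[of u] unfolding mem_F_iff Bset_def by auto
  then show ?thesis
    using rank_inject[OF finite_Bset] by blast
qed

lemma left_unique_F:
  assumes "(u, v) \<in> F" "(u', v) \<in> F"
  shows "u' = u"
proof -
  have "u \<in> A (a u)" "u' \<in> A (a u)" "rank (A (a u)) u' = rank (A (a u)) u"
    using assms unfolding mem_F_iff Aset_def by auto
  then show ?thesis
    using rank_inject[OF finite_Aset] by blast
qed

lemma r_configuration_F: "r_configuration n r F"
  unfolding r_configuration_def
proof (intro conjI ballI)
  show "F \<subseteq> I \<times> I"
    by (rule F_subset)
next
  fix u assume "u \<in> I"
  then show "\<exists>!v. (u, v) \<in> F"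
    using partner_in_F eq_partner_if_in_F by blast
next
  fix v assume v: "v \<in> I"
  let ?k = "b v"
  have "v \<in> B ?k"
    using v unfolding Bset_def by simp
  then have "rank (B ?k) v < card (A ?k)"
    using rank_less_card[OF finite_Bset] balanced by simp
  then have i: "card (A ?k) - Suc (rank (B ?k) v) < card (A ?k)"
    by linarith
  define u where "u = sorted_list_of_set (A ?k) ! (card (A ?k) - Suc (rank (B ?k) v))"
  have "u \<in> A ?k" "rank (A ?k) u = card (A ?k) - Suc (rank (B ?k) v)"
    unfolding u_def using sorted_list_of_set_nth_mem[OF finite_Aset i]
      rank_nth_sorted_list_of_set[OF finite_Aset i] by simp_all
  then have "(u, v) \<in> F"
    unfolding mem_F_iff using v \<open>v \<in> B ?k\<close> rank_less_card[OF finite_Bset \<open>v \<in> B ?k\<close>] balanced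
    unfolding Aset_def by auto
  then show "\<exists>!u. (u, v) \<in> F"
    using left_unique_F by blast
qed

lemma same_level_cross:
  assumes "(u, v) \<in> F" "(u', v') \<in> F" "a u' = a u" "u < u'"
  shows "v' < v"
proof -
  let ?k = "a u"
  have "u \<in> A ?k" "v \<in> B ?k" "v' \<in> B ?k"
    using assms(1-3) unfolding mem_F_iff Aset_def Bset_def by auto
  moreover have "rank (A ?k) u < rank (A ?k) u'"
    using rank_strict_mono[OF finite_Aset \<open>u \<in> A ?k\<close> assms(4)] .
  then have "rank (B ?k) v' < rank (B ?k) v"
    using assms(1-3) unfolding mem_F_iff by auto
  ultimately show ?thesis
    using rank_less_rank_iff[OF finite_Bset] by blast
qed

sublocale crossing_levels F a
proof
  show "finite F" by (rule finite_F)
  show "(u, v) \<in> F \<Longrightarrow> 0 < a u" for u v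
    using labels unfolding mem_F_iff by fastforce
  show "(u, v) \<in> F \<Longrightarrow> (u', v') \<in> F \<Longrightarrow> a u' = a u \<Longrightarrow> u < u' \<Longrightarrow> v' < v" for u v u' v'
    by (rule same_level_cross)
qed

lemma kfun_le_card:
  assumes "u \<in> I"
  shows "kfun n r a u \<le> card (B (a u))"
proof -
  have "u \<in> A (a u)"
    using assms unfolding Aset_def by simp
  then show ?thesis
    using kfun_eq_Suc_rank[OF assms] rank_less_card[OF finite_Aset] balanced by (metis Suc_leI)
qed

text \<open>Partners within a level decrease, so among the elements of level \<open>a u - 1\<close> before \<open>u\<close>
  the last one has the smallest partner; its \<open>kfun\<close> is \<open>lfun u\<close>, so that partner is the
  left-hand side of the inequality in Condition (C).\<close>

lemma condition_C_at_iff: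
  assumes u: "u \<in> I" and level: "1 < a u"
  shows "(0 < lfun n r a u \<and> lfun n r a u \<le> card (B (a u - 1)) \<and> kfun n r a u \<le> card (B (a u)) \<and>
      kth_last (B (a u - 1)) (lfun n r a u) < kth_last (B (a u)) (kfun n r a u))
    \<longleftrightarrow> (\<exists>(u', v') \<in> F. a u' = a u - 1 \<and> u' < u \<and> v' < partner u)"
    (is "?C \<longleftrightarrow> ?pred")
proof
  assume ?C
  let ?below = "{y \<in> I. y \<le> u \<and> a y = a u - 1}"
  have "?below \<noteq> {}"
    using \<open>?C\<close> unfolding lfun_def by (metis card.empty less_irrefl)
  define u' where "u' = Max ?below"
  have "u' \<in> ?below"
    unfolding u'_def using \<open>?below \<noteq> {}\<close> by (intro Max_in) simp_all
  then have u': "u' \<in> I" "u' \<le> u" "a u' = a u - 1"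
    by simp_all
  have last: "y \<le> u'" if "y \<in> I" "a y = a u - 1" "y \<le> u" for y
    unfolding u'_def using that by (intro Max_ge) simp_all
  have "u' \<noteq> u"
    using u'(3) level by auto
  have "kfun n r a u' = lfun n r a u"
    using u'(3,2) last by (rule kfun_eq_lfun)
  then have "partner u' < partner u"
    using \<open>?C\<close> u'(3) unfolding partner_def by simp
  moreover have "u' < u"
    using u'(2) \<open>u' \<noteq> u\<close> by simp
  ultimately show ?pred
    using partner_in_F[OF u'(1)] u'(3) by blast
next
  assume ?pred
  then obtain u' v' where u'v': "(u', v') \<in> F" "a u' = a u - 1" "u' < u" "v' < partner u"
    by blast
  have u': "u' \<in> I"
    using u'v'(1) F_subset by blast
  have "0 < kfun n r a u'"
    by (simp add: kfun_eq_Suc_rank[OF u'])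
  moreover have "kfun n r a u' \<le> lfun n r a u"
    using u'v'(2,3) by (intro kfun_le_lfun) simp_all
  moreover have "lfun n r a u \<le> card (B (a u - 1))"
    using lfun_le_card balanced by metis
  moreover have "kfun n r a u \<le> card (B (a u))"
    by (rule kfun_le_card[OF u])
  moreover have "kth_last (B (a u - 1)) (lfun n r a u) \<le> v'"
    using calculation eq_partner_if_in_F[OF u'v'(1)] u'v'(2)
    by (simp add: partner_def kth_last_antimono)
  ultimately show ?C
    using u'v'(4) unfolding partner_def by simp
qed

lemma condition_C_iff_has_predecessors: "condition_C n r a b \<longleftrightarrow> has_predecessors F a"
proof -
  have "has_predecessors F a \<longleftrightarrow>
      (\<forall>u \<in> I. 1 < a u \<longrightarrow> (\<exists>(u', v') \<in> F. a u' = a u - 1 \<and> u' < u \<and> v' < partner u))"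
    unfolding has_predecessors_def
    using partner_in_F eq_partner_if_in_F F_subset by blast
  then show ?thesis
    unfolding condition_C_def using condition_C_at_iff by simp
qed

lemma Phi_a_F_eq_longest_chain:
  assumes "(u, v) \<in> F"
  shows "Phi_a F u = longest_chain F u v"
  using assms by (rule Phi_a_eq_longest_chain) (metis assms eq_partner_if_in_F)

lemma Phi_b_F_eq_longest_chain:
  assumes "(u, v) \<in> F"
  shows "Phi_b F v = longest_chain F u v"
  using assms by (rule Phi_b_eq_longest_chain) (metis assms left_unique_F)

lemma Phi_eq_labels_iff_has_predecessors:
  "(\<forall>u \<in> I. Phi_a F u = a u) \<and> (\<forall>v \<in> I. Phi_b F v = b v) \<longleftrightarrow> has_predecessors F a"
proof
  assume Phi: "(\<forall>u \<in> I. Phi_a F u = a u) \<and> (\<forall>v \<in> I. Phi_b F v = b v)"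
  have "longest_chain F u v = a u" if "(u, v) \<in> F" for u v
    using that Phi Phi_a_F_eq_longest_chain[OF that] F_subset by auto
  then show "has_predecessors F a"
    by (rule has_predecessors_if_longest_chain_eq_level[OF finite_F])
next
  assume pred: "has_predecessors F a"
  have "Phi_a F u = a u \<and> Phi_b F v = b v" if "(u, v) \<in> F" for u v
    using Phi_a_F_eq_longest_chain[OF that] Phi_b_F_eq_longest_chain[OF that]
      longest_chain_eq_level[OF pred that] that unfolding mem_F_iff by simp
  then show "(\<forall>u \<in> I. Phi_a F u = a u) \<and> (\<forall>v \<in> I. Phi_b F v = b v)"
    using r_configuration_F unfolding r_configuration_def by metis
qed

end

theorem lemma8:
  fixes n r d :: nat and a b :: "nat \<times> nat \<Rightarrow> nat"
  assumes "n \<ge> 1" and "r \<ge> 1" and "d \<ge> 1"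
    and "in_Wstar d n r a b"
  shows "(r_configuration n r (phi d n r a b) \<and>
          (\<forall>u \<in> Ibar n r. Phi_a (phi d n r a b) u = a u) \<and>
          (\<forall>v \<in> Ibar n r. Phi_b (phi d n r a b) v = b v))
         \<longleftrightarrow> condition_C n r a b"
proof -
  have labels: "\<forall>u \<in> Ibar n r. a u \<in> {1..d}"
    using assms(4) unfolding in_Wstar_def by blast
  have phi_levels: "\<forall>(u, v) \<in> phi d n r a b. b v = a u"
    using phi_subset_levels by blast
  show ?thesis
  proof
    assume H: "r_configuration n r (phi d n r a b) \<and>
          (\<forall>u \<in> Ibar n r. Phi_a (phi d n r a b) u = a u) \<and>
          (\<forall>v \<in> Ibar n r. Phi_b (phi d n r a b) v = b v)"
    interpret balanced_walk n r d a b
      using labels r_configuration_level_card_eq[OF conjunct1[OF H] phi_levels]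
      by unfold_locales
    show "condition_C n r a b"
      using H condition_C_iff_has_predecessors Phi_eq_labels_iff_has_predecessors by blast
  next
    assume C: "condition_C n r a b"
    interpret balanced_walk n r d a b
      using labels condition_C_balanced[OF assms(4) C] by unfold_locales
    show "r_configuration n r (phi d n r a b) \<and>
          (\<forall>u \<in> Ibar n r. Phi_a (phi d n r a b) u = a u) \<and>
          (\<forall>v \<in> Ibar n r. Phi_b (phi d n r a b) v = b v)"
      using C r_configuration_F condition_C_iff_has_predecessors Phi_eq_labels_iff_has_predecessors
      by blast
  qed
qed

end
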